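(* Let $V\neq\emptyset$, let $F\colon V\leadsto V$ be an undirected multifunction and let $m,k\in\mathbb{N}$. Then: (i) $F^{\infty\cup}_{\mid m}(w)=\{u\in V\mid \mathrm{Walk}_{u\to w}(F,V\mid m)\neq\emptyset\}$ for every $w\in V$, and $F^{\infty\cup}_{\mid m}$ is undirected, everywhereloop and transitive; (ii) $F^{\infty\cup}_{\mid -m}=F^{\infty-}_{\mid m}=F^{\infty\cup}_{\mid m}$; (iii) $(F^{m\cup})^{\infty\cup}_{\mid k}=F^{\infty\cup}_{\mid k\cdot m}$; (iv) if $k\mid m$ then $F^{\infty\cup}_{\mid m}\subset F^{\infty\cup}_{\mid k}$ and $F^{m\cup}\subset F^{\infty\cup}_{\mid k}$; (v) $F^{m\cup}\subset F^{\infty\cup}_{\mid m}\subset F^{\infty\cup}_{\mid 1}$.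
   Context: Here $\mathbb{N}=\{0,1,2,\dots\}$, $-\mathbb{N}=\{-n\mid n\in\mathbb{N}\}$. A multifunction $F\colon V\leadsto V$ is a map $V\to P(V)$, with inverse $F^{-1}(v)=\{x\mid v\in F(x)\}$; it is undirected if $F=F^{-1}$, everywhereloop if $v\in F(v)$ for all $v$, transitive if $u\in F(v)$ and $v\in F(w)$ imply $u\in F(w)$. Inclusion and union of multifunctions are pointwise. For $A\subset V$: $F_{\cup}(A)=\bigcup_{a\in A}F(a)$, $F_{-}(A)=\{x\mid F(x)\cap A\neq\emptyset\}$. For $n\in\mathbb{Z}$: $F^{0\cup}(v)=\{v\}$, $F^{n\cup}(v)=F_{\cup}(F^{(n-1)\cup}(v))$ for $n>0$, $F^{n\cup}=(F^{-1})^{(-n)\cup}$ for $n<0$; similarly $F^{0-}(v)=\{v\}$, $F^{n-}(v)=F_{-}(F^{(n-1)-}(v))$ for $n>0$, $F^{n-}=(F^{-1})^{(-n)-}$ for $n<0$. For $m\in\mathbb{Z}$: $F^{+\infty\cup}_{\mid m}=\bigcup_{n\in\mathbb{N}}F^{(mn)\cup}$, $F^{-\infty\cup}_{\mid m}=\bigcup_{n\in-\mathbb{N}}F^{(mn)\cup}$, $F^{\infty\cup}_{\mid m}=F^{+\infty\cup}_{\mid m}\cup F^{-\infty\cup}_{\mid m}$, and analogously $F^{\infty-}_{\mid m}=\bigcup_{n\in\mathbb{N}}F^{(mn)-}\cup\bigcup_{n\in-\mathbb{N}}F^{(mn)-}$. $\mathrm{Walk}_{u\to w}(F,V,n)$ is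 the set of words $\alpha_1\cdots\alpha_{n+1}$ over $V$ with $\alpha_1=u$, $\alpha_{n+1}=w$, $\alpha_i\in F(\alpha_{i+1})$ for $1\le i\le n$; and $\mathrm{Walk}_{u\to w}(F,V\mid m)=\bigcup_{n\in\mathbb{N}}\mathrm{Walk}_{u\to w}(F,V,m\cdot n)$. *)

theory Defs
  imports Main
begin

(* The vertex set V is represented by the (nonempty) type 'a; a multifunction
   F : V \<leadsto> V is a function 'a \<Rightarrow> 'a set. Inclusion of multifunctions is the
   pointwise order \<le> on functions. *)

definition mf_inv :: "('a \<Rightarrow> 'a set) \<Rightarrow> 'a \<Rightarrow> 'a set" where
  "mf_inv F v = {x. v \<in> F x}"

definition undirected :: "('a \<Rightarrow> 'a set) \<Rightarrow> bool" where
  "undirected F \<longleftrightarrow> F = mf_inv F"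

definition everywhereloop :: "('a \<Rightarrow> 'a set) \<Rightarrow> bool" where
  "everywhereloop F \<longleftrightarrow> (\<forall>v. v \<in> F v)"

definition mf_transitive :: "('a \<Rightarrow> 'a set) \<Rightarrow> bool" where
  "mf_transitive F \<longleftrightarrow> (\<forall>u v w. u \<in> F v \<and> v \<in> F w \<longrightarrow> u \<in> F w)"

definition F_cup :: "('a \<Rightarrow> 'a set) \<Rightarrow> 'a set \<Rightarrow> 'a set" where
  "F_cup F A = (\<Union>a\<in>A. F a)"

definition F_minus :: "('a \<Rightarrow> 'a set) \<Rightarrow> 'a set \<Rightarrow> 'a set" where
  "F_minus F A = {x. F x \<inter> A \<noteq> {}}"

primrec pow_cup_nat :: "('a \<Rightarrow> 'a set) \<Rightarrow> nat \<Rightarrow> 'a \<Rightarrow> 'a set" where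
  "pow_cup_nat F 0 v = {v}"
| "pow_cup_nat F (Suc n) v = F_cup F (pow_cup_nat F n v)"

primrec pow_minus_nat :: "('a \<Rightarrow> 'a set) \<Rightarrow> nat \<Rightarrow> 'a \<Rightarrow> 'a set" where
  "pow_minus_nat F 0 v = {v}"
| "pow_minus_nat F (Suc n) v = F_minus F (pow_minus_nat F n v)"

definition pow_cup :: "('a \<Rightarrow> 'a set) \<Rightarrow> int \<Rightarrow> 'a \<Rightarrow> 'a set" where
  "pow_cup F n = (if 0 \<le> n then pow_cup_nat F (nat n) else pow_cup_nat (mf_inv F) (nat (- n)))"

definition pow_minus :: "('a \<Rightarrow> 'a set) \<Rightarrow> int \<Rightarrow> 'a \<Rightarrow> 'a set" where
  "pow_minus F n = (if 0 \<le> n then pow_minus_nat F (nat n) else pow_minus_nat (mf_inv F) (nat (- n)))"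

definition inf_cup_pos :: "('a \<Rightarrow> 'a set) \<Rightarrow> int \<Rightarrow> 'a \<Rightarrow> 'a set" where
  "inf_cup_pos F m v = (\<Union>n::nat. pow_cup F (m * int n) v)"

definition inf_cup_neg :: "('a \<Rightarrow> 'a set) \<Rightarrow> int \<Rightarrow> 'a \<Rightarrow> 'a set" where
  "inf_cup_neg F m v = (\<Union>n::nat. pow_cup F (m * (- int n)) v)"

definition inf_cup :: "('a \<Rightarrow> 'a set) \<Rightarrow> int \<Rightarrow> 'a \<Rightarrow> 'a set" where
  "inf_cup F m v = inf_cup_pos F m v \<union> inf_cup_neg F m v"

definition inf_minus :: "('a \<Rightarrow> 'a set) \<Rightarrow> int \<Rightarrow> 'a \<Rightarrow> 'a set" where
  "inf_minus F m v = (\<Union>n::nat. pow_minus F (m * int n) v) \<union> (\<Union>n::nat. pow_minus F (m * (- int n)) v)"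

(* Walk_{u\<rightarrow>w}(F,V,n): words \<alpha>_1\<dots>\<alpha>_{n+1} (lists of length n+1, 0-indexed here)
   with \<alpha>_1 = u, \<alpha>_{n+1} = w, \<alpha>_i \<in> F(\<alpha>_{i+1}) *)
definition Walk :: "('a \<Rightarrow> 'a set) \<Rightarrow> 'a \<Rightarrow> 'a \<Rightarrow> nat \<Rightarrow> 'a list set" where
  "Walk F u w n = {xs. length xs = n + 1 \<and> xs ! 0 = u \<and> xs ! n = w \<and>
                       (\<forall>i<n. xs ! i \<in> F (xs ! (i + 1)))}"

definition Walk_mult :: "('a \<Rightarrow> 'a set) \<Rightarrow> 'a \<Rightarrow> 'a \<Rightarrow> nat \<Rightarrow> 'a list set" where
  "Walk_mult F u w m = (\<Union>n::nat. Walk F u w (m * n))"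

end

theory Submission
  imports Defs
begin

text \<open>For undirected \<open>F\<close> the inverse, the preimage operator \<open>F_minus\<close> and the negative
  powers all collapse onto \<open>F\<close>, \<open>F_cup\<close> and the positive powers, so every multifunction in the
  statement is the relation ``reachable by a walk whose length is a multiple of \<open>m\<close>''. Its
  properties then follow from \<open>F^(a+b) = F^a \<circ> F^b\<close> and \<open>(F^m)^k = F^(m k)\<close>.\<close>

lemma pow_cup_nat_add:
  "pow_cup_nat F (a + b) w = (\<Union>x\<in>pow_cup_nat F b w. pow_cup_nat F a x)"
  by (induction a) (auto simp: F_cup_def)

lemma pow_cup_nat_pow_cup_nat: "pow_cup_nat (pow_cup_nat F m) k = pow_cup_nat F (m * k)"
proof (rule ext, induction k)
  case 0
  then show ?case by simp
next
  case (Suc k)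
  then show ?case using pow_cup_nat_add[of F m "m * k"] by (simp add: F_cup_def)
qed

lemma Walk_Suc_nonempty_iff:
  "Walk F u w (Suc n) \<noteq> {} \<longleftrightarrow> (\<exists>x. u \<in> F x \<and> Walk F x w n \<noteq> {})"
proof
  assume "Walk F u w (Suc n) \<noteq> {}"
  then obtain xs where xs: "xs \<in> Walk F u w (Suc n)" by blast
  have "tl xs \<in> Walk F (xs ! 1) w n"
    using xs unfolding Walk_def by (auto simp: nth_tl)
  moreover have "u \<in> F (xs ! 1)"
    using xs unfolding Walk_def by force
  ultimately show "\<exists>x. u \<in> F x \<and> Walk F x w n \<noteq> {}" by blast
next
  assume "\<exists>x. u \<in> F x \<and> Walk F x w n \<noteq> {}"
  then obtain x ys where "u \<in> F x" "ys \<in> Walk F x w n" by blast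
  then have "u # ys \<in> Walk F u w (Suc n)"
    unfolding Walk_def by (auto simp: nth_Cons' less_Suc_eq_0_disj)
  then show "Walk F u w (Suc n) \<noteq> {}" by blast
qed

lemma mem_pow_cup_nat_iff_Walk: "u \<in> pow_cup_nat F n w \<longleftrightarrow> Walk F u w n \<noteq> {}"
proof (induction n arbitrary: u)
  case 0
  then show ?case by (auto simp: Walk_def intro: exI[of _ "[w]"])
next
  case (Suc n)
  then show ?case by (auto simp: F_cup_def Walk_Suc_nonempty_iff)
qed

lemma undirected_mem_sym: "undirected F \<Longrightarrow> u \<in> F v \<longleftrightarrow> v \<in> F u"
  unfolding undirected_def mf_inv_def by (metis mem_Collect_eq)

lemma undirected_iff_sym: "undirected F \<longleftrightarrow> (\<forall>u v. u \<in> F v \<longleftrightarrow> v \<in> F u)"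
  unfolding undirected_def mf_inv_def fun_eq_iff by blast

lemma undirected_mf_inv_eq: "undirected F \<Longrightarrow> mf_inv F = F"
  unfolding undirected_def by simp

lemma undirected_F_minus_eq_F_cup: "undirected F \<Longrightarrow> F_minus F A = F_cup F A"
  unfolding F_minus_def F_cup_def using undirected_mem_sym by fastforce

lemma undirected_pow_minus_nat_eq: "undirected F \<Longrightarrow> pow_minus_nat F n = pow_cup_nat F n"
proof (rule ext)
  fix v
  assume "undirected F"
  then show "pow_minus_nat F n v = pow_cup_nat F n v"
    by (induction n) (auto simp: undirected_F_minus_eq_F_cup)
qed

lemma undirected_pow_cup_nat:
  assumes "undirected F"
  shows "undirected (pow_cup_nat F n)"
  unfolding undirected_iff_sym
proof (induction n)
  case 0
  then show ?case by auto
next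
  case (Suc n)
  have "u \<in> pow_cup_nat F (Suc n) v \<longleftrightarrow> (\<exists>x. x \<in> pow_cup_nat F n v \<and> u \<in> F x)" for u v
    by (auto simp: F_cup_def)
  also have "\<dots> u v \<longleftrightarrow> (\<exists>x. v \<in> pow_cup_nat F n x \<and> x \<in> F u)" for u v
    using Suc undirected_mem_sym[OF assms] by metis
  also have "\<dots> u v \<longleftrightarrow> v \<in> pow_cup_nat F (n + 1) u" for u v
    using pow_cup_nat_add[of F n 1 u] by (auto simp: F_cup_def)
  finally show ?case by simp
qed

lemma undirected_pow_cup_eq: "undirected F \<Longrightarrow> pow_cup F i = pow_cup_nat F (nat \<bar>i\<bar>)"
  unfolding pow_cup_def by (auto simp: undirected_mf_inv_eq)

lemma undirected_pow_minus_eq: "undirected F \<Longrightarrow> pow_minus F i = pow_cup_nat F (nat \<bar>i\<bar>)"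
  unfolding pow_minus_def by (auto simp: undirected_mf_inv_eq undirected_pow_minus_nat_eq)

definition reach_mult :: "('a \<Rightarrow> 'a set) \<Rightarrow> nat \<Rightarrow> 'a \<Rightarrow> 'a set" where
  "reach_mult F m v = (\<Union>n. pow_cup_nat F (m * n) v)"

lemma undirected_inf_cup_eq: "undirected F \<Longrightarrow> inf_cup F i = reach_mult F (nat \<bar>i\<bar>)"
  unfolding inf_cup_def inf_cup_pos_def inf_cup_neg_def reach_mult_def
  by (simp add: undirected_pow_cup_eq abs_mult nat_mult_distrib)

lemma undirected_inf_minus_eq: "undirected F \<Longrightarrow> inf_minus F i = reach_mult F (nat \<bar>i\<bar>)"
  unfolding inf_minus_def reach_mult_def
  by (simp add: undirected_pow_minus_eq abs_mult nat_mult_distrib)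

lemma reach_mult_eq_Walk_mult: "reach_mult F m w = {u. Walk_mult F u w m \<noteq> {}}"
  unfolding reach_mult_def Walk_mult_def by (auto simp: mem_pow_cup_nat_iff_Walk)

lemma everywhereloop_reach_mult: "everywhereloop (reach_mult F m)"
  unfolding everywhereloop_def reach_mult_def UN_iff
  by (metis UNIV_I mult_0_right pow_cup_nat.simps(1) singletonI)

lemma mf_transitive_reach_mult: "mf_transitive (reach_mult F m)"
  unfolding mf_transitive_def
proof (intro allI impI)
  fix u v w
  assume "u \<in> reach_mult F m v \<and> v \<in> reach_mult F m w"
  then obtain a b where "u \<in> pow_cup_nat F (m * a) v" "v \<in> pow_cup_nat F (m * b) w"
    by (auto simp: reach_mult_def)
  then have "u \<in> pow_cup_nat F (m * (a + b)) w"
    using pow_cup_nat_add[of F "m * a" "m * b" w] by (auto simp: add_mult_distrib2)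
  then show "u \<in> reach_mult F m w"
    by (auto simp: reach_mult_def)
qed

lemma undirected_reach_mult:
  assumes "undirected F"
  shows "undirected (reach_mult F m)"
  using undirected_mem_sym[OF undirected_pow_cup_nat[OF assms]]
  unfolding undirected_iff_sym reach_mult_def by blast

lemma reach_mult_pow_cup_nat: "reach_mult (pow_cup_nat F m) k = reach_mult F (m * k)"
  unfolding reach_mult_def pow_cup_nat_pow_cup_nat by (simp add: mult.assoc)

lemma pow_cup_nat_le_reach_mult: "pow_cup_nat F m \<le> reach_mult F m"
proof (rule le_funI)
  fix v
  show "pow_cup_nat F m v \<subseteq> reach_mult F m v"
    using UN_upper[of 1 UNIV "\<lambda>n. pow_cup_nat F (m * n) v"] by (simp add: reach_mult_def)
qed

lemma reach_mult_antimono: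
  assumes "k dvd m"
  shows "reach_mult F m \<le> reach_mult F k"
proof (rule le_funI)
  fix v
  obtain c where "m = k * c" using assms by blast
  then show "reach_mult F m v \<subseteq> reach_mult F k v"
    unfolding reach_mult_def by (auto simp: mult.assoc)
qed

theorem lemma4p11:
  fixes F :: "'a \<Rightarrow> 'a set" and m k :: nat
  assumes "undirected F"
  shows "((\<forall>w. inf_cup F (int m) w = {u. Walk_mult F u w m \<noteq> {}})
       \<and> undirected (inf_cup F (int m)) \<and> everywhereloop (inf_cup F (int m))
       \<and> mf_transitive (inf_cup F (int m)))
       \<and> (inf_cup F (- int m) = inf_minus F (int m) \<and> inf_minus F (int m) = inf_cup F (int m))
       \<and> inf_cup (pow_cup F (int m)) (int k) = inf_cup F (int k * int m)
       \<and> (k dvd m \<longrightarrow> inf_cup F (int m) \<le> inf_cup F (int k) \<and> pow_cup F (int m) \<le> inf_cup F (int k))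
       \<and> (pow_cup F (int m) \<le> inf_cup F (int m) \<and> inf_cup F (int m) \<le> inf_cup F 1)"
proof -
  have inf_cup: "inf_cup F (int n) = reach_mult F n" for n
    using undirected_inf_cup_eq[OF assms, of "int n"] by simp
  have pow_cup: "pow_cup F (int m) = pow_cup_nat F m"
    using undirected_pow_cup_eq[OF assms] by simp
  have negative: "inf_cup F (- int m) = reach_mult F m"
    using undirected_inf_cup_eq[OF assms] by simp
  have minus: "inf_minus F (int m) = reach_mult F m"
    using undirected_inf_minus_eq[OF assms] by simp
  have iterate: "inf_cup (pow_cup_nat F m) (int k) = reach_mult F (m * k)"
    using undirected_inf_cup_eq[OF undirected_pow_cup_nat[OF assms], of m "int k"]
    by (simp add: reach_mult_pow_cup_nat)
  have product: "inf_cup F (int k * int m) = reach_mult F (m * k)"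
    using inf_cup[of "m * k"] by (simp add: mult.commute)
  have one: "inf_cup F 1 = reach_mult F 1"
    using inf_cup[of 1] by simp
  have "k dvd m \<Longrightarrow> pow_cup_nat F m \<le> reach_mult F k"
    using pow_cup_nat_le_reach_mult reach_mult_antimono order_trans by blast
  then show ?thesis
    unfolding pow_cup iterate product negative minus one inf_cup
    by (intro conjI allI impI)
      (simp_all add: reach_mult_eq_Walk_mult undirected_reach_mult[OF assms]
        everywhereloop_reach_mult mf_transitive_reach_mult pow_cup_nat_le_reach_mult
        reach_mult_antimono)
qed

end
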